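(* Under the hypotheses of the previous lemma (reals $p_j\ge0$, $x_j$, $x_{\{j\}\cup\{j'\}}$ with nonnegative symmetric entries, $x_{\{j\}\cup\{j\}}=x_j\ge 0$, and PSD matrix $X$ with $X_{0,0}=1$, $X_{0,j}=x_j$, $X_{j,j'}=x_{\{j\}\cup\{j'\}}$), let $G\subseteq\{1,\dots,n'\}$, $\bar G=\{1,\dots,n'\}\setminus G$, $L=\sum_{j=1}^{n'}x_jp_j$, $Q=\sum_{j=1}^{n'}x_jp_j^2$, $\bar L=\sum_{j\in\bar G}x_jp_j$, $\bar Q=\sum_{j\in\bar G}x_jp_j^2$, and $R=\sum_{j=1}^{n'}p_j\big(p_1x_{\{j\}\cup\{1\}}+\dots+p_jx_{\{j\}\cup\{j\}}\big)$. Then $R\ge Q$, $R\ge \tfrac12(Q+L^2)$, and $R\ge \tfrac12(\bar Q+Q+(L-\bar L)^2)$. *)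

theory Defs
  imports Complex_Main
begin

definition psd_mat :: "nat \<Rightarrow> (nat \<Rightarrow> nat \<Rightarrow> real) \<Rightarrow> bool" where
  "psd_mat m M \<longleftrightarrow>
     (\<forall>i\<le>m. \<forall>j\<le>m. M i j = M j i) \<and>
     (\<forall>v :: nat \<Rightarrow> real. 0 \<le> (\<Sum>i\<le>m. \<Sum>j\<le>m. v i * M i j * v j))"

definition moment_mat :: "(nat \<Rightarrow> real) \<Rightarrow> (nat \<Rightarrow> nat \<Rightarrow> real) \<Rightarrow> nat \<Rightarrow> nat \<Rightarrow> real" where
  "moment_mat x xx i j =
     (if i = 0 \<and> j = 0 then 1
      else if i = 0 then x j
      else if j = 0 then x i
      else xx i j)"

end

theory Submission
  imports Defs
begin

(* By symmetry of the pair moments, twice the lower-triangular sum R equals S + Q, where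
   S = sum_{i,j} p_i p_j x_{ij} is the full double sum over {1..n'} and Q its diagonal.
   Testing the positive semidefinite moment matrix against the vector (-c, w) with
   c = sum_j x_j w_j gives the Schur complement bound (sum_{j in G} x_j p_j)^2 <= S_G, the
   G x G block of S; as all terms are nonnegative, S dominates S_G plus the diagonal outside
   G, which is Qbar. Hence 2R >= Q + Qbar + (L - Lbar)^2 for every G, and the three claims
   are the cases G = {}, G = {1..n'} and the given G. *)

lemma sum_lower_triangle_sym:
  fixes a :: "nat \<Rightarrow> nat \<Rightarrow> 'a::comm_semiring_1"
  assumes "\<And>i j. i \<in> {1..n} \<Longrightarrow> j \<in> {1..n} \<Longrightarrow> a i j = a j i"
  shows "2 * (\<Sum>j=1..n. \<Sum>i=1..j. a j i) = (\<Sum>i=1..n. \<Sum>j=1..n. a i j) + (\<Sum>j=1..n. a j j)"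
  using assms
proof (induction n)
  case 0
  then show ?case by simp
next
  case (Suc n)
  have col_row: "(\<Sum>i=1..n. a i (Suc n)) = (\<Sum>i=1..n. a (Suc n) i)"
    using Suc.prems by (intro sum.cong) auto
  from Suc have "2 * (\<Sum>j=1..n. \<Sum>i=1..j. a j i) = (\<Sum>i=1..n. \<Sum>j=1..n. a i j) + (\<Sum>j=1..n. a j j)"
    by auto
  with col_row show ?case
    by (simp add: sum.distrib algebra_simps mult_2)
qed

lemma double_sum_block_plus_diag_le:
  fixes f :: "'b \<Rightarrow> 'b \<Rightarrow> 'a::ordered_comm_monoid_add"
  assumes "finite U" "G \<subseteq> U" and nonneg: "\<And>i j. i \<in> U \<Longrightarrow> j \<in> U \<Longrightarrow> 0 \<le> f i j"
  shows "(\<Sum>i\<in>G. \<Sum>j\<in>G. f i j) + (\<Sum>j\<in>U - G. f j j) \<le> (\<Sum>i\<in>U. \<Sum>j\<in>U. f i j)"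
proof -
  let ?g = "\<lambda>(i, j). f i j" and ?D = "(\<lambda>j. (j, j)) ` (U - G)"
  have fin: "finite G" "finite (U - G)"
    using assms(1,2) finite_subset by auto
  have "(\<Sum>j\<in>U - G. f j j) = sum ?g ?D"
    by (subst sum.reindex) (auto simp: inj_on_def)
  moreover have "(G \<times> G) \<inter> ?D = {}"
    by auto
  ultimately have "(\<Sum>i\<in>G. \<Sum>j\<in>G. f i j) + (\<Sum>j\<in>U - G. f j j) = sum ?g (G \<times> G \<union> ?D)"
    using fin by (simp add: sum.union_disjoint sum.cartesian_product)
  also have "\<dots> \<le> sum ?g (U \<times> U)"
    using assms by (intro sum_mono2) auto
  finally show ?thesis
    by (simp add: sum.cartesian_product)
qed

lemma psd_moment_mat_square_le:
  assumes psd: "psd_mat n (moment_mat x xx)" and A: "A \<subseteq> {1..n}"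
  shows "(\<Sum>j\<in>A. x j * w j)\<^sup>2 \<le> (\<Sum>i\<in>A. \<Sum>j\<in>A. w i * xx i j * w j)"
proof -
  define c where "c = (\<Sum>j\<in>A. x j * w j)"
  define v where "v i = (if i = 0 then - c else if i \<in> A then w i else 0)" for i
  let ?M = "moment_mat x xx" and ?S = "\<Sum>i\<in>A. \<Sum>j\<in>A. w i * xx i j * w j"
  have fin: "finite A" and A0: "0 \<notin> A" and sub: "insert 0 A \<subseteq> {..n}"
    using A finite_subset by auto
  have v_out: "v i = 0" if "i \<notin> insert 0 A" for i
    using that by (simp add: v_def)
  have "0 \<le> (\<Sum>i\<le>n. \<Sum>j\<le>n. v i * ?M i j * v j)"
    using psd by (simp add: psd_mat_def)
  also have "\<dots> = (\<Sum>i\<in>insert 0 A. \<Sum>j\<in>insert 0 A. v i * ?M i j * v j)"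
  proof -
    have "(\<Sum>j\<le>n. v i * ?M i j * v j) = (\<Sum>j\<in>insert 0 A. v i * ?M i j * v j)" for i
      using sub v_out by (intro sum.mono_neutral_right) auto
    then show ?thesis
      using sub v_out by (simp, intro sum.mono_neutral_right) auto
  qed
  also have "\<dots> = c * c - c * c - c * c + ?S"
  proof -
    have v_A: "v i = w i" and M_A: "?M i j = xx i j" and M_0: "?M i 0 = x i" "?M 0 i = x i"
      if "i \<in> A" "j \<in> A" for i j
      using that A0 by (auto simp: v_def moment_mat_def)
    have row0: "(\<Sum>j\<in>insert 0 A. v 0 * ?M 0 j * v j) = c * c - c * c"
    proof -
      have "(\<Sum>j\<in>A. v 0 * ?M 0 j * v j) = - c * (\<Sum>j\<in>A. x j * w j)"
        by (simp add: sum_distrib_left v_A M_0 mult.assoc cong: sum.cong) (simp add: v_def)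
      then show ?thesis
        using fin A0 by (simp add: v_def moment_mat_def c_def)
    qed
    have row: "(\<Sum>j\<in>insert 0 A. v i * ?M i j * v j)
        = - c * (x i * w i) + (\<Sum>j\<in>A. w i * xx i j * w j)" if "i \<in> A" for i
      using fin A0 that v_A M_A M_0 by (simp add: v_def)
    have "(\<Sum>i\<in>A. c * (x i * w i)) = c * c"
      by (simp add: c_def sum_distrib_left)
    moreover have "(\<Sum>i\<in>insert 0 A. \<Sum>j\<in>insert 0 A. v i * ?M i j * v j)
        = (c * c - c * c) + (\<Sum>i\<in>A. - c * (x i * w i) + (\<Sum>j\<in>A. w i * xx i j * w j))"
      unfolding sum.insert[OF fin A0, of "\<lambda>i. \<Sum>j\<in>insert 0 A. v i * ?M i j * v j"] row0
      using row by (intro arg_cong2[where f = "(+)"] refl sum.cong) auto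
    ultimately show ?thesis
      by (simp add: sum.distrib sum_subtractf)
  qed
  finally show ?thesis
    by (simp add: c_def power2_eq_square)
qed

lemma moment_lower_triangle_bound:
  fixes p x :: "nat \<Rightarrow> real" and xx :: "nat \<Rightarrow> nat \<Rightarrow> real"
  assumes p_nonneg: "\<And>j. j \<in> {1..n} \<Longrightarrow> 0 \<le> p j"
    and xx_nonneg: "\<And>i j. i \<in> {1..n} \<Longrightarrow> j \<in> {1..n} \<Longrightarrow> 0 \<le> xx i j"
    and xx_sym: "\<And>i j. i \<in> {1..n} \<Longrightarrow> j \<in> {1..n} \<Longrightarrow> xx i j = xx j i"
    and xx_diag: "\<And>j. j \<in> {1..n} \<Longrightarrow> xx j j = x j"
    and psd: "psd_mat n (moment_mat x xx)"
    and G: "G \<subseteq> {1..n}"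
  shows "(\<Sum>j\<in>G. x j * p j)\<^sup>2 + (\<Sum>j\<in>{1..n} - G. x j * p j ^ 2) + (\<Sum>j=1..n. x j * p j ^ 2)
    \<le> 2 * (\<Sum>j=1..n. p j * (\<Sum>i=1..j. p i * xx j i))"
proof -
  define f where "f i j = p i * p j * xx i j" for i j
  let ?S = "\<lambda>A. \<Sum>i\<in>A. \<Sum>j\<in>A. f i j"
  have diag: "f j j = x j * p j ^ 2" if "j \<in> {1..n}" for j
    using xx_diag[OF that] by (simp add: f_def power2_eq_square)
  have "2 * (\<Sum>j=1..n. p j * (\<Sum>i=1..j. p i * xx j i)) = 2 * (\<Sum>j=1..n. \<Sum>i=1..j. f j i)"
    by (simp add: f_def sum_distrib_left ac_simps)
  also have "\<dots> = ?S {1..n} + (\<Sum>j=1..n. x j * p j ^ 2)"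
    using diag xx_sym by (subst sum_lower_triangle_sym) (auto simp: f_def intro: sum.cong)
  finally have two_R: "2 * (\<Sum>j=1..n. p j * (\<Sum>i=1..j. p i * xx j i))
      = ?S {1..n} + (\<Sum>j=1..n. x j * p j ^ 2)" .
  have "(\<Sum>j\<in>G. x j * p j)\<^sup>2 \<le> ?S G"
    using psd_moment_mat_square_le[OF psd G, of p] by (simp add: f_def ac_simps)
  moreover have "?S G + (\<Sum>j\<in>{1..n} - G. f j j) \<le> ?S {1..n}"
    using G p_nonneg xx_nonneg by (intro double_sum_block_plus_diag_le) (auto simp: f_def)
  moreover have "(\<Sum>j\<in>{1..n} - G. f j j) = (\<Sum>j\<in>{1..n} - G. x j * p j ^ 2)"
    using diag by simp
  ultimately show ?thesis
    using two_R by linarith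
qed

theorem corollary1:
  fixes n' :: nat
    and p x :: "nat \<Rightarrow> real"
    and xx :: "nat \<Rightarrow> nat \<Rightarrow> real"
    and G :: "nat set"
  assumes p_nonneg: "\<forall>j\<in>{1..n'}. p j \<ge> 0"
    and xx_nonneg: "\<forall>j\<in>{1..n'}. \<forall>j'\<in>{1..n'}. xx j j' \<ge> 0"
    and xx_sym: "\<forall>j\<in>{1..n'}. \<forall>j'\<in>{1..n'}. xx j j' = xx j' j"
    and xx_diag: "\<forall>j\<in>{1..n'}. xx j j = x j"
    and x_nonneg: "\<forall>j\<in>{1..n'}. x j \<ge> 0"
    and X_psd: "psd_mat n' (moment_mat x xx)"
    and G_sub: "G \<subseteq> {1..n'}"
  shows "(\<Sum>j=1..n'. p j * (\<Sum>i=1..j. p i * xx j i)) \<ge> (\<Sum>j=1..n'. x j * p j ^ 2)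
       \<and> (\<Sum>j=1..n'. p j * (\<Sum>i=1..j. p i * xx j i))
           \<ge> ((\<Sum>j=1..n'. x j * p j ^ 2) + (\<Sum>j=1..n'. x j * p j) ^ 2) / 2
       \<and> (\<Sum>j=1..n'. p j * (\<Sum>i=1..j. p i * xx j i))
           \<ge> ((\<Sum>j\<in>{1..n'} - G. x j * p j ^ 2) + (\<Sum>j=1..n'. x j * p j ^ 2)
               + ((\<Sum>j=1..n'. x j * p j) - (\<Sum>j\<in>{1..n'} - G. x j * p j)) ^ 2) / 2"
proof -
  have bound: "(\<Sum>j\<in>H. x j * p j)\<^sup>2 + (\<Sum>j\<in>{1..n'} - H. x j * p j ^ 2) + (\<Sum>j=1..n'. x j * p j ^ 2)
      \<le> 2 * (\<Sum>j=1..n'. p j * (\<Sum>i=1..j. p i * xx j i))" if "H \<subseteq> {1..n'}" for H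
    using moment_lower_triangle_bound[OF _ _ _ _ X_psd that] p_nonneg xx_nonneg xx_sym xx_diag
    by blast
  have "(\<Sum>j=1..n'. x j * p j) - (\<Sum>j\<in>{1..n'} - G. x j * p j) = (\<Sum>j\<in>G. x j * p j)"
    using sum.subset_diff[OF G_sub, of "\<lambda>j. x j * p j"] by simp
  with bound[of "{}"] bound[of "{1..n'}"] bound[OF G_sub] show ?thesis
    by simp
qed

end
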